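(* Let $f\in C^2([1,t_m))$ be the solution of $f''+\frac{4}{3t}f'-\frac{2}{3t^2}f(1+f)-\frac{4(f')^2}{3(1+f)}=0$, $f(1)=\beta>0$, $f'(1)=\beta_0>0$, on its maximal interval of existence $[1,t_m)$, let $0<A<2$ and $g(t)=\exp\big(-A\int_1^t\frac{f(s)(1+f(s))}{s^2f'(s)}ds\big)$. Then $$\lim_{t\to t_m}\frac{1}{g(t)f(t)^{1/2}}=0 .$$
   Context: It is known that $f>0$, $f'>0$ on $[1,t_m)$ and $f(t)\to+\infty$ as $t\to t_m$. *)

theory Defs
  imports "HOL-Analysis.Analysis"
begin

definition approach_left :: "ereal \<Rightarrow> real filter" where
  "approach_left T = (if T = \<infinity> then at_top else at_left (real_of_ereal T))"

end

theory Submission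
  imports Defs
begin

text \<open>
  Put \<open>w = exp L = t powr (4/3) * f' / (1 + f) powr (4/3)\<close>. The equation turns into
  \<open>L' = 2/3 * f (1 + f) / (t\<^sup>2 f')\<close>, i.e. \<open>w' = 2/3 * f * t powr (-2/3) * (1 + f) powr (-1/3)\<close>,
  so the integral in \<open>g\<close> equals \<open>3/2 * (L t - L 1)\<close> and \<open>1 / g = (w / w 1) powr (3 A / 2)\<close>.
  Since \<open>f \<ge> f 1\<close>, \<open>w\<close> grows at least like \<open>t powr (1/3)\<close>; feeding this into
  \<open>((1 + f) powr (-1/3))' = -1/3 * w * t powr (-4/3)\<close> makes the positive quantity
  \<open>(1 + f) powr (-1/3)\<close> decrease like \<open>- c ln t\<close>, so \<open>t\<^sub>m\<close> is finite. On the bounded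
  interval \<open>w\<^sup>2 - 4 t powr (2/3) (1 + f) powr (1/3)\<close> decreases, hence \<open>w\<^sup>2 = O(f powr (1/3))\<close>
  and \<open>1 / (g sqrt f) = O(f powr (A/4 - 1/2))\<close>, which tends to \<open>0\<close> because \<open>A < 2\<close>.
\<close>

lemma DERIV_nonpos_imp_decreasing_interval:
  fixes g g' :: "real \<Rightarrow> real"
  assumes S: "is_interval S"
    and deriv: "\<And>x. x \<in> S \<Longrightarrow> (g has_real_derivative g' x) (at x within S)"
    and nonpos: "\<And>x. x \<in> S \<Longrightarrow> g' x \<le> 0"
    and ab: "a \<in> S" "b \<in> S" "a \<le> b"
  shows "g b \<le> g a"
proof (rule DERIV_nonpos_imp_decreasing_open[OF \<open>a \<le> b\<close>])
  have sub: "{a..b} \<subseteq> S"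
    using S ab unfolding is_interval_1 by (meson atLeastAtMost_iff subsetI)
  show "continuous_on {a..b} g"
    by (rule continuous_on_subset[OF _ sub])
      (meson DERIV_continuous continuous_on_eq_continuous_within deriv)
  fix x assume x: "a < x" "x < b"
  then have "x \<in> interior S"
    using interior_mono[OF sub] by auto
  then have "at x within S = at x"
    by (rule at_within_interior)
  moreover have "x \<in> S"
    using sub x by auto
  ultimately show "\<exists>y. DERIV g x :> y \<and> y \<le> 0"
    using deriv nonpos by metis
qed

lemma bdd_above_ereal_interval_imp_finite:
  assumes "bdd_above {t::real. a \<le> t \<and> ereal t < T}"
  shows "T \<noteq> \<infinity>"
proof
  assume "T = \<infinity>"
  then obtain M where "\<And>t. a \<le> t \<Longrightarrow> t \<le> M"
    using assms unfolding bdd_above_def by auto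
  from this[of "max a M + 1"] show False
    by (smt (verit) max.cobounded1 max.cobounded2)
qed

lemma tendsto_zero_if_bounded_by_neg_powr:
  fixes G h :: "'a \<Rightarrow> real"
  assumes h: "filterlim h at_top F" and "s < 0"
    and bound: "eventually (\<lambda>x. 0 \<le> G x \<and> G x \<le> C * h x powr s) F"
  shows "(G \<longlongrightarrow> 0) F"
proof (rule tendsto_sandwich[OF _ _ tendsto_const])
  show "((\<lambda>x. C * h x powr s) \<longlongrightarrow> 0) F"
    using h \<open>s < 0\<close> by (intro tendsto_mult_right_zero tendsto_neg_powr)
qed (use bound in \<open>eventually_elim, simp\<close>)+

locale ode_solution =
  fixes I :: "real set" and f f' f'' :: "real \<Rightarrow> real"
  assumes interval: "is_interval I"
    and one_in_I: "1 \<in> I"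
    and ge_one: "\<And>t. t \<in> I \<Longrightarrow> 1 \<le> t"
    and f_deriv: "\<And>t. t \<in> I \<Longrightarrow> (f has_real_derivative f' t) (at t within I)"
    and f'_deriv: "\<And>t. t \<in> I \<Longrightarrow> (f' has_real_derivative f'' t) (at t within I)"
    and ode: "\<And>t. t \<in> I \<Longrightarrow>
       f'' t + 4 / (3 * t) * f' t - 2 / (3 * t\<^sup>2) * f t * (1 + f t)
         - 4 * (f' t)\<^sup>2 / (3 * (1 + f t)) = 0"
    and f_pos: "\<And>t. t \<in> I \<Longrightarrow> f t > 0"
    and f'_pos: "\<And>t. t \<in> I \<Longrightarrow> f' t > 0"
begin

lemmas decreasing_on_I = DERIV_nonpos_imp_decreasing_interval[OF interval]

lemma f_mono:
  assumes "a \<in> I" "b \<in> I" "a \<le> b"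
  shows "f a \<le> f b"
proof -
  have "- f b \<le> - f a"
    by (rule decreasing_on_I[of "\<lambda>t. - f t" "\<lambda>t. - f' t"])
      (use assms f'_pos in \<open>auto intro: DERIV_minus f_deriv less_imp_le\<close>)
  then show ?thesis by simp
qed

definition L :: "real \<Rightarrow> real" where
  "L t = 4/3 * ln t + ln (f' t) - 4/3 * ln (1 + f t)"

definition w :: "real \<Rightarrow> real" where
  "w t = exp (L t)"

lemma w_eq: "t \<in> I \<Longrightarrow> w t = t powr (4/3) * f' t / (1 + f t) powr (4/3)"
  using ge_one[of t] f_pos[of t] f'_pos[of t]
  by (simp add: w_def L_def exp_add exp_diff powr_def)

lemma L_deriv:
  assumes t: "t \<in> I"
  shows "(L has_real_derivative 2/3 * f t * (1 + f t) / (t\<^sup>2 * f' t)) (at t within I)"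
proof -
  have pos: "t > 0" "f t > 0" "f' t > 0"
    using ge_one[OF t] f_pos[OF t] f'_pos[OF t] by auto
  have "(L has_real_derivative 4/3 * (1/t) + f'' t / f' t - 4/3 * (f' t / (1 + f t))) (at t within I)"
    unfolding L_def using pos
    by (auto intro!: derivative_eq_intros f_deriv[OF t] f'_deriv[OF t]) (auto simp: divide_simps)
  moreover have "f'' t = - 4 / (3 * t) * f' t + 2 / (3 * t\<^sup>2) * f t * (1 + f t)
      + 4 * (f' t)\<^sup>2 / (3 * (1 + f t))"
    using ode[OF t] by linarith
  then have "4/3 * (1/t) + f'' t / f' t - 4/3 * (f' t / (1 + f t))
      = 2/3 * f t * (1 + f t) / (t\<^sup>2 * f' t)"
    using pos by (simp add: divide_simps power2_eq_square) (simp add: algebra_simps)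
  ultimately show ?thesis by simp
qed

lemma w_deriv:
  assumes t: "t \<in> I"
  shows "(w has_real_derivative 2/3 * f t * t powr (-2/3) * (1 + f t) powr (-1/3))
    (at t within I)"
proof -
  have pos: "t > 0" "f t > 0" "f' t > 0"
    using ge_one[OF t] f_pos[OF t] f'_pos[OF t] by auto
  have "t powr (-2/3) = t powr (4/3) / t\<^sup>2"
    using powr_diff[of t "4/3" 2] pos by (simp add: powr_realpow)
  moreover have "(1 + f t) powr (-1/3) = (1 + f t) / (1 + f t) powr (4/3)"
    using powr_diff[of "1 + f t" 1 "4/3"] pos by simp
  ultimately have eq: "w t * (2/3 * f t * (1 + f t) / (t\<^sup>2 * f' t))
      = 2/3 * f t * t powr (-2/3) * (1 + f t) powr (-1/3)"
    using pos unfolding w_eq[OF t] by (simp add: field_simps)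
  have "(w has_real_derivative w t * (2/3 * f t * (1 + f t) / (t\<^sup>2 * f' t)))
      (at t within I)"
    unfolding w_def by (rule DERIV_chain2[OF DERIV_exp L_deriv[OF t]])
  then show ?thesis
    unfolding eq .
qed

definition c0 :: real where
  "c0 = 2/3 * f 1 / (1 + f 1)"

lemma c0_le:
  assumes x: "x \<in> I"
  shows "3/2 * c0 \<le> f x * (1 + f x) powr (-1/3)"
proof -
  have pos: "f 1 > 0" "f x > 0"
    using f_pos x one_in_I by auto
  have "3/2 * c0 = f 1 / (1 + f 1)"
    using pos by (simp add: c0_def field_simps)
  also have "\<dots> \<le> f x / (1 + f x)"
    using f_mono[OF one_in_I x ge_one[OF x]] pos by (simp add: divide_simps algebra_simps)
  also have "\<dots> = f x * (1 + f x) powr (-1)"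
    using pos by (simp add: powr_minus_divide)
  also have "\<dots> \<le> f x * (1 + f x) powr (-1/3)"
    using pos by (intro mult_left_mono powr_mono) auto
  finally show ?thesis .
qed

lemma w_lower:
  assumes t: "t \<in> I"
  shows "w 1 - 3 * c0 + 3 * c0 * t powr (1/3) \<le> w t"
proof -
  have "3 * c0 * t powr (1/3) - w t \<le> 3 * c0 * 1 powr (1/3) - w 1"
  proof (rule decreasing_on_I[OF _ _ one_in_I t ge_one[OF t]])
    fix x assume x: "x \<in> I"
    have pos: "x > 0" "f x > 0"
      using ge_one[OF x] f_pos[OF x] by auto
    show "((\<lambda>s. 3 * c0 * s powr (1/3) - w s) has_real_derivative
        c0 * x powr (-2/3) - 2/3 * f x * x powr (-2/3) * (1 + f x) powr (-1/3)) (at x within I)"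
      using pos by (auto intro!: derivative_eq_intros w_deriv x)
    show "c0 * x powr (-2/3) - 2/3 * f x * x powr (-2/3) * (1 + f x) powr (-1/3) \<le> 0"
      using c0_le[OF x] pos by (simp add: mult_right_mono)
  qed
  then show ?thesis by simp
qed

lemma c0_ln_le:
  assumes t: "t \<in> I"
  shows "c0 * ln t \<le> (1 + f 1) powr (-1/3) + 2 * \<bar>w 1 - 3 * c0\<bar>"
proof -
  define D where "D = w 1 - 3 * c0"
  have "(1 + f t) powr (-1/3) + c0 * ln t - D * t powr (-1/3)
      \<le> (1 + f 1) powr (-1/3) + c0 * ln 1 - D * 1 powr (-1/3)"
  proof (rule decreasing_on_I[OF _ _ one_in_I t ge_one[OF t]])
    fix x assume x: "x \<in> I"
    have pos: "x > 0" "f x > 0" "f' x > 0"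
      using ge_one[OF x] f_pos[OF x] f'_pos[OF x] by auto
    show "((\<lambda>s. (1 + f s) powr (-1/3) + c0 * ln s - D * s powr (-1/3)) has_real_derivative
        - 1/3 * (1 + f x) powr (-4/3) * f' x + c0 / x + D/3 * x powr (-4/3)) (at x within I)"
      using pos by (auto intro!: derivative_eq_intros f_deriv x)
    have "(1 + f x) powr (-4/3) * f' x = w x * x powr (-4/3)"
      using pos powr_add[of x "4/3" "-4/3"] unfolding w_eq[OF x] by (simp add: powr_minus_divide)
    moreover have "x powr (1/3) * x powr (-4/3) = 1 / x"
      using pos powr_add[of x "1/3" "-4/3"] by (simp add: powr_minus_divide)
    ultimately have "- 1/3 * (1 + f x) powr (-4/3) * f' x + c0 / x + D/3 * x powr (-4/3)
        = - 1/3 * x powr (-4/3) * (w x - D - 3 * c0 * x powr (1/3))"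
      by (simp add: algebra_simps)
    also have "\<dots> \<le> 0"
      using w_lower[OF x] unfolding D_def by simp
    finally show "- 1/3 * (1 + f x) powr (-4/3) * f' x + c0 / x + D/3 * x powr (-4/3) \<le> 0" .
  qed
  then have "c0 * ln t \<le> (1 + f 1) powr (-1/3) - D + D * t powr (-1/3) - (1 + f t) powr (-1/3)"
    by simp
  also have "\<dots> \<le> (1 + f 1) powr (-1/3) + 2 * \<bar>D\<bar>"
  proof -
    have "t powr (-1/3) \<le> 1"
      using powr_mono[of "-1/3" 0 t] ge_one[OF t] by simp
    then have "\<bar>D * t powr (-1/3)\<bar> \<le> \<bar>D\<bar>"
      by (simp add: abs_mult mult_left_le)
    moreover have "(1 + f t) powr (-1/3) > 0"
      using f_pos[OF t] by simp
    ultimately show ?thesis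
      by linarith
  qed
  finally show ?thesis
    unfolding D_def .
qed

lemma bdd_above_I: "bdd_above I"
proof (rule bdd_aboveI)
  define B where "B = (1 + f 1) powr (-1/3) + 2 * \<bar>w 1 - 3 * c0\<bar>"
  have c0: "c0 > 0"
    using f_pos[OF one_in_I] by (simp add: c0_def)
  fix t assume t: "t \<in> I"
  have "ln t \<le> B / c0"
    using c0_ln_le[OF t] c0 unfolding B_def by (simp add: pos_le_divide_eq mult.commute)
  then show "t \<le> exp (B / c0)"
    using ge_one[OF t] by (metis exp_le_cancel_iff exp_ln less_le_trans zero_less_one)
qed

lemma w_mult_deriv_le:
  assumes x: "x \<in> I"
  shows "2 * w x * (2/3 * f x * x powr (-2/3) * (1 + f x) powr (-1/3))
    \<le> 4/3 * (x powr (2/3) * (1 + f x) powr (-2/3) * f' x)"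
proof -
  have pos: "x > 0" "f x > 0" "f' x > 0"
    using ge_one[OF x] f_pos[OF x] f'_pos[OF x] by auto
  obtain G where G: "1 + f x = G" "G > 0"
    using pos by (metis add_pos_pos zero_less_one)
  define u where "u = G powr (1/3)"
  have u: "u > 0"
    using G unfolding u_def by simp
  have e1: "x powr (2/3) = x powr (4/3) * x powr (-2/3)"
    using powr_add[of x "4/3" "-2/3"] by simp
  have e2: "G powr (4/3) = u * G"
    using powr_add[of G "1/3" 1] G unfolding u_def by simp
  have e3: "G powr (-1/3) = G powr (-2/3) * u"
    using powr_add[of G "-2/3" "1/3"] unfolding u_def by simp
  have "2 * w x * (2/3 * f x * x powr (-2/3) * (1 + f x) powr (-1/3))
      = 4/3 * (x powr (2/3) * (1 + f x) powr (-2/3) * f' x) * (f x / (1 + f x))"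
    using G(2) u unfolding w_eq[OF x] G(1) e1 e2 e3 by (simp add: field_simps)
  also have "\<dots> \<le> 4/3 * (x powr (2/3) * (1 + f x) powr (-2/3) * f' x)"
    using pos by (intro mult_left_le) simp_all
  finally show ?thesis .
qed

lemma w_square_le:
  assumes t: "t \<in> I"
  shows "(w t)\<^sup>2 - 4 * t powr (2/3) * (1 + f t) powr (1/3) \<le> (w 1)\<^sup>2 - 4 * (1 + f 1) powr (1/3)"
proof -
  have "(w t)\<^sup>2 - 4 * t powr (2/3) * (1 + f t) powr (1/3)
      \<le> (w 1)\<^sup>2 - 4 * 1 powr (2/3) * (1 + f 1) powr (1/3)"
  proof (rule decreasing_on_I[OF _ _ one_in_I t ge_one[OF t]])
    fix x assume x: "x \<in> I"
    have pos: "x > 0" "f x > 0"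
      using ge_one[OF x] f_pos[OF x] by auto
    define X where "X = x powr (2/3) * (1 + f x) powr (-2/3) * f' x"
    show "((\<lambda>s. (w s)\<^sup>2 - 4 * s powr (2/3) * (1 + f s) powr (1/3)) has_real_derivative
        2 * w x * (2/3 * f x * x powr (-2/3) * (1 + f x) powr (-1/3))
        - 4 * (2/3 * x powr (-1/3) * (1 + f x) powr (1/3) + 1/3 * X)) (at x within I)"
      using pos unfolding X_def
      by (auto intro!: derivative_eq_intros w_deriv f_deriv x) (simp add: algebra_simps)
    have "2 * w x * (2/3 * f x * x powr (-2/3) * (1 + f x) powr (-1/3))
        - 4 * (2/3 * x powr (-1/3) * (1 + f x) powr (1/3) + 1/3 * X)
        \<le> 4/3 * X - 4 * (2/3 * x powr (-1/3) * (1 + f x) powr (1/3) + 1/3 * X)"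
      using w_mult_deriv_le[OF x] unfolding X_def by (rule diff_right_mono)
    also have "\<dots> \<le> 0"
      by simp
    finally show "2 * w x * (2/3 * f x * x powr (-2/3) * (1 + f x) powr (-1/3))
        - 4 * (2/3 * x powr (-1/3) * (1 + f x) powr (1/3) + 1/3 * X) \<le> 0" .
  qed
  then show ?thesis by simp
qed

lemma w_square_bound:
  obtains M where "M \<ge> 0" "\<And>t. t \<in> I \<Longrightarrow> 1 \<le> f t \<Longrightarrow> (w t)\<^sup>2 \<le> M * f t powr (1/3)"
proof -
  obtain T where T: "\<And>t. t \<in> I \<Longrightarrow> t \<le> T"
    using bdd_above_I by (auto simp: bdd_above_def)
  define Q where "Q = (w 1)\<^sup>2 - 4 * (1 + f 1) powr (1/3)"
  show thesis
  proof (rule that)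
    show "\<bar>Q\<bar> + 8 * T powr (2/3) \<ge> 0"
      by simp
    fix t assume t: "t \<in> I" and f1: "1 \<le> f t"
    have f13: "1 \<le> f t powr (1/3)"
      using f1 by (simp add: ge_one_powr_ge_zero)
    have "t powr (2/3) \<le> T powr (2/3)"
      using T[OF t] ge_one[OF t] by (intro powr_mono2) auto
    moreover have "(1 + f t) powr (1/3) \<le> 2 * f t powr (1/3)"
    proof -
      have "(1 + f t) powr (1/3) \<le> (2 * f t) powr (1/3)"
        using f1 by (intro powr_mono2) auto
      also have "\<dots> = 2 powr (1/3) * f t powr (1/3)"
        using f1 by (simp add: powr_mult)
      also have "\<dots> \<le> 2 * f t powr (1/3)"
        using powr_mono[of "1/3" 1 "2::real"] f13 by (intro mult_right_mono) auto
      finally show ?thesis .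
    qed
    ultimately have "4 * t powr (2/3) * (1 + f t) powr (1/3) \<le> 4 * T powr (2/3) * (2 * f t powr (1/3))"
      by (intro mult_mono mult_left_mono) auto
    moreover have "\<bar>Q\<bar> \<le> \<bar>Q\<bar> * f t powr (1/3)"
      using f13 by (simp add: mult_le_cancel_left1)
    moreover have "(\<bar>Q\<bar> + 8 * T powr (2/3)) * f t powr (1/3)
        = \<bar>Q\<bar> * f t powr (1/3) + 4 * T powr (2/3) * (2 * f t powr (1/3))"
      by (simp add: algebra_simps)
    ultimately show "(w t)\<^sup>2 \<le> (\<bar>Q\<bar> + 8 * T powr (2/3)) * f t powr (1/3)"
      using w_square_le[OF t] abs_ge_self[of Q] unfolding Q_def by linarith
  qed
qed

lemma integral_eq_L:
  assumes t: "t \<in> I"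
  shows "integral {1..t} (\<lambda>s. f s * (1 + f s) / (s\<^sup>2 * f' s)) = 3/2 * (L t - L 1)"
proof -
  have sub: "{1..t} \<subseteq> I"
    using interval one_in_I t unfolding is_interval_1 by (meson atLeastAtMost_iff subsetI)
  have "((\<lambda>s. f s * (1 + f s) / (s\<^sup>2 * f' s)) has_integral 3/2 * L t - 3/2 * L 1) {1..t}"
  proof (rule fundamental_theorem_of_calculus)
    show "1 \<le> t"
      using ge_one[OF t] .
    fix x assume "x \<in> {1..t}"
    then have "((\<lambda>s. 3/2 * L s) has_real_derivative 3/2 * (2/3 * f x * (1 + f x) / (x\<^sup>2 * f' x)))
        (at x within {1..t})"
      using DERIV_subset[OF DERIV_cmult[OF L_deriv] sub] sub by blast
    then have "((\<lambda>s. 3/2 * L s) has_real_derivative f x * (1 + f x) / (x\<^sup>2 * f' x)) (at x within {1..t})"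
      by simp
    then show "((\<lambda>s. 3/2 * L s) has_vector_derivative f x * (1 + f x) / (x\<^sup>2 * f' x)) (at x within {1..t})"
      by (simp add: has_real_derivative_iff_has_vector_derivative)
  qed
  then show ?thesis
    by (simp add: integral_unique algebra_simps)
qed

lemma exp_integral_sqrt_bound:
  assumes "0 \<le> A"
  obtains C where "\<And>t. t \<in> I \<Longrightarrow> 1 \<le> f t \<Longrightarrow>
    1 / (exp (- A * integral {1..t} (\<lambda>s. f s * (1 + f s) / (s\<^sup>2 * f' s))) * sqrt (f t))
      \<le> C * f t powr (A/4 - 1/2)"
proof -
  obtain M where M: "M \<ge> 0" "\<And>t. t \<in> I \<Longrightarrow> 1 \<le> f t \<Longrightarrow> (w t)\<^sup>2 \<le> M * f t powr (1/3)"
    using w_square_bound by blast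
  show thesis
  proof (rule that)
    fix t assume t: "t \<in> I" and f1: "1 \<le> f t"
    have "exp (3*A/2 * L t) = (w t)\<^sup>2 powr (3*A/4)"
      by (simp add: w_def powr_def power2_eq_square exp_add[symmetric])
    also have "\<dots> \<le> (M * f t powr (1/3)) powr (3*A/4)"
      using M(2)[OF t f1] assms by (intro powr_mono2) auto
    also have "\<dots> = M powr (3*A/4) * f t powr (A/4)"
      using M(1) f1 by (simp add: powr_mult powr_powr)
    finally have L_le: "exp (3*A/2 * L t) \<le> M powr (3*A/4) * f t powr (A/4)" .
    have "1 / (exp (- A * integral {1..t} (\<lambda>s. f s * (1 + f s) / (s\<^sup>2 * f' s))) * sqrt (f t))
        = exp (- 3*A/2 * L 1) * exp (3*A/2 * L t) / f t powr (1/2)"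
      using f1 unfolding integral_eq_L[OF t]
      by (simp add: powr_half_sqrt exp_minus exp_add[symmetric] field_simps)
    also have "\<dots> \<le> exp (- 3*A/2 * L 1) * (M powr (3*A/4) * f t powr (A/4)) / f t powr (1/2)"
      using L_le by (intro divide_right_mono mult_left_mono) auto
    also have "\<dots> = exp (- 3*A/2 * L 1) * M powr (3*A/4) * f t powr (A/4 - 1/2)"
      by (simp add: powr_diff)
    finally show "1 / (exp (- A * integral {1..t} (\<lambda>s. f s * (1 + f s) / (s\<^sup>2 * f' s))) * sqrt (f t))
        \<le> exp (- 3*A/2 * L 1) * M powr (3*A/4) * f t powr (A/4 - 1/2)" .
  qed
qed

end

theorem corollarys:
  fixes f f' f'' :: "real \<Rightarrow> real" and tm :: ereal and \<beta> \<beta>0 A :: real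
  defines "I \<equiv> {t::real. 1 \<le> t \<and> ereal t < tm}"
  assumes tm: "tm > 1"
    and d1: "\<And>t. t \<in> I \<Longrightarrow> (f has_real_derivative f' t) (at t within I)"
    and d2: "\<And>t. t \<in> I \<Longrightarrow> (f' has_real_derivative f'' t) (at t within I)"
    and c2: "continuous_on I f''"
    and ode: "\<And>t. t \<in> I \<Longrightarrow>
       f'' t + 4 / (3 * t) * f' t - 2 / (3 * t\<^sup>2) * f t * (1 + f t)
         - 4 * (f' t)\<^sup>2 / (3 * (1 + f t)) = 0"
    and init: "f 1 = \<beta>" "\<beta> > 0" "f' 1 = \<beta>0" "\<beta>0 > 0"
    and pos: "\<And>t. t \<in> I \<Longrightarrow> f t > 0" "\<And>t. t \<in> I \<Longrightarrow> f' t > 0"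
    and blowup: "filterlim f at_top (approach_left tm)"
    and A: "0 < A" "A < 2"
  shows "((\<lambda>t. 1 / (exp (- A * integral {1..t} (\<lambda>s. f s * (1 + f s) / (s\<^sup>2 * f' s)))
                       * sqrt (f t))) \<longlongrightarrow> 0) (approach_left tm)"
proof -
  interpret ode_solution I f f' f''
  proof
    show "is_interval I"
      unfolding is_interval_1 I_def by auto (meson ereal_less_eq(3) le_less_trans)
    show "1 \<in> I"
      using tm by (simp add: I_def one_ereal_def)
  qed (use d1 d2 ode pos in \<open>auto simp: I_def\<close>)
  have "tm \<noteq> \<infinity>"
    using bdd_above_I unfolding I_def by (rule bdd_above_ereal_interval_imp_finite)
  then obtain T where T: "tm = ereal T"
    using tm by (cases tm) auto
  then have T1: "T > 1" and F: "approach_left tm = at_left T"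
    using tm by (simp_all add: one_ereal_def approach_left_def)
  let ?G = "\<lambda>t. 1 / (exp (- A * integral {1..t} (\<lambda>s. f s * (1 + f s) / (s\<^sup>2 * f' s))) * sqrt (f t))"
  obtain C where C: "\<And>t. t \<in> I \<Longrightarrow> 1 \<le> f t \<Longrightarrow> ?G t \<le> C * f t powr (A/4 - 1/2)"
    using exp_integral_sqrt_bound A by (meson less_imp_le)
  have "eventually (\<lambda>t. t \<in> I) (at_left T)"
    using eventually_at_left_real[OF T1] by eventually_elim (auto simp: I_def T)
  moreover have "eventually (\<lambda>t. 1 \<le> f t) (at_left T)"
    using blowup unfolding F filterlim_at_top by blast
  ultimately have "eventually (\<lambda>t. 0 \<le> ?G t \<and> ?G t \<le> C * f t powr (A/4 - 1/2)) (at_left T)"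
    by eventually_elim (rule conjI, simp, rule C)
  then show ?thesis
    using blowup A unfolding F by (intro tendsto_zero_if_bounded_by_neg_powr[of f _ "A/4 - 1/2"]) auto
qed

end
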